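(* Let $X$ be a locally compact Hausdorff space, $Y\subseteq X$ a subset, and $\mathcal{F}=\{U\in\mathcal{O}(X):Y\subseteq U\}$. Then $\mathcal{F}$ is an m-filter which is 1-step over $\mathcal{O}(X)$, and for $U,V\in\mathcal{O}(X)$ we have $\overline U=\overline V$ in $\mathcal{O}(X)_\mathcal{F}$ if and only if $U\cap Y=V\cap Y$.
   Context: $\mathcal{O}(X)$ is the quantale of open subsets of $X$ (order inclusion, join union, multiplication intersection, top $X$); it is a module over itself. An m-filter is a subset containing $X$, upward closed and closed under intersection. For $\mathcal{F}$ an m-filter and $U,V\in\mathcal{O}(X)$: $U\preceq^1_\mathcal{F}V$ means there are open sets $U_i$ and $S_i\in\mathcal{F}$ ($i\in I$) with $U\subseteq\bigcup_iU_i$ and $S_i\cap U_i\subseteq V$; $U\preceq^n_\mathcal{F}V$ means a chain of $n$ such steps; $U\preceq_\mathcal{F}V$ means $U\preceq^n_\mathcal{F}V$ for some $n\ge1$. $\mathcal{O}(X)_\mathcal{F}$ is $\mathcal{O}(X)$ modulo $U\sim V\iff U\preceq_\mathcal{F}V\preceq_\mathcal{F}U$, with classes $\overline U$. $\mathcal{F}$ is 1-step over $\mathcal{O}(X)$ if $U\preceq_\mathcal{F}V$ implies $U\preceq^1_\mathcal{F}V$. *)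

theory Defs
  imports "HOL-Analysis.Analysis"
begin

text \<open>The quantale O(X) is represented by the open sets of the topology X
(openin X), with order inclusion, join union, multiplication intersection,
top = topspace X.\<close>

definition m_filter :: "'a topology \<Rightarrow> 'a set set \<Rightarrow> bool" where
  "m_filter X F \<longleftrightarrow>
     F \<subseteq> {U. openin X U} \<and>
     topspace X \<in> F \<and>
     (\<forall>U V. U \<in> F \<longrightarrow> openin X V \<longrightarrow> U \<subseteq> V \<longrightarrow> V \<in> F) \<and>
     (\<forall>U V. U \<in> F \<longrightarrow> V \<in> F \<longrightarrow> U \<inter> V \<in> F)"

definition preceq1 :: "'a topology \<Rightarrow> 'a set set \<Rightarrow> 'a set \<Rightarrow> 'a set \<Rightarrow> bool" where
  "preceq1 X F U V \<longleftrightarrow>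
     (\<exists>P. (\<forall>(W, S) \<in> P. openin X W \<and> S \<in> F \<and> S \<inter> W \<subseteq> V) \<and>
          U \<subseteq> \<Union>(fst ` P))"

text \<open>n-step chain (meaningful for n \<ge> 1; the 0 case is only an auxiliary base).\<close>
fun preceqn :: "'a topology \<Rightarrow> 'a set set \<Rightarrow> nat \<Rightarrow> 'a set \<Rightarrow> 'a set \<Rightarrow> bool" where
  "preceqn X F 0 U V \<longleftrightarrow> U = V"
| "preceqn X F (Suc n) U V \<longleftrightarrow>
     (\<exists>W. openin X W \<and> preceqn X F n U W \<and> preceq1 X F W V)"

definition preceq :: "'a topology \<Rightarrow> 'a set set \<Rightarrow> 'a set \<Rightarrow> 'a set \<Rightarrow> bool" where
  "preceq X F U V \<longleftrightarrow> (\<exists>n\<ge>1. preceqn X F n U V)"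

definition one_step :: "'a topology \<Rightarrow> 'a set set \<Rightarrow> bool" where
  "one_step X F \<longleftrightarrow>
     (\<forall>U V. openin X U \<longrightarrow> openin X V \<longrightarrow> preceq X F U V \<longrightarrow> preceq1 X F U V)"

text \<open>Class of U in O(X)_F = O(X) modulo U ~ V iff U \<preceq> V \<preceq> U.\<close>
definition quot_class :: "'a topology \<Rightarrow> 'a set set \<Rightarrow> 'a set \<Rightarrow> 'a set set" where
  "quot_class X F U = {V. openin X V \<and> preceq X F U V \<and> preceq X F V U}"

end

theory Submission
  imports Defs
begin

text \<open>For the m-filter of open neighbourhoods of \<open>Y\<close>, a single step \<open>U \<preceq>\<^sup>1 V\<close> already
forces \<open>U \<inter> Y \<subseteq> V\<close>: a point of \<open>U \<inter> Y\<close> lies in some \<open>U\<^sub>i\<close> and in \<open>S\<^sub>i \<supseteq> Y\<close>, hence in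
\<open>S\<^sub>i \<inter> U\<^sub>i \<subseteq> V\<close>; so every chain does too. Conversely, a locally compact Hausdorff space is
regular, so if \<open>U \<inter> Y \<subseteq> V\<close> we may cover \<open>U\<close> by open sets \<open>W\<close> contained in closed sets
\<open>C \<subseteq> U\<close>, and pair each \<open>W\<close> with \<open>V \<union> (X - C)\<close>, an open set containing \<open>Y\<close>. Thus \<open>U \<preceq> V\<close>,
\<open>U \<preceq>\<^sup>1 V\<close> and \<open>U \<inter> Y \<subseteq> V\<close> all coincide, which gives both the 1-step property and the
description of the quotient.\<close>

lemma m_filter_open_supersets:
  assumes "Y \<subseteq> topspace X"
  shows "m_filter X {S. openin X S \<and> Y \<subseteq> S}"
  using assms unfolding m_filter_def by auto

lemma preceq1_open_supersets_imp_Int_subset: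
  assumes "preceq1 X {S. openin X S \<and> Y \<subseteq> S} U V"
  shows "U \<inter> Y \<subseteq> V"
proof
  fix y assume y: "y \<in> U \<inter> Y"
  obtain P where P: "\<forall>(W, S) \<in> P. openin X W \<and> openin X S \<and> Y \<subseteq> S \<and> S \<inter> W \<subseteq> V"
    and "U \<subseteq> \<Union>(fst ` P)"
    using assms unfolding preceq1_def by auto
  then obtain W S where "(W, S) \<in> P" "y \<in> W" using y by force
  with P y show "y \<in> V" by blast
qed

lemma preceqn_open_supersets_imp_Int_subset:
  assumes "preceqn X {S. openin X S \<and> Y \<subseteq> S} n U V"
  shows "U \<inter> Y \<subseteq> V"
  using assms
proof (induction n arbitrary: V)
  case 0
  then show ?case by simp
next
  case (Suc n)
  then obtain W where "preceqn X {S. openin X S \<and> Y \<subseteq> S} n U W"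
    and "preceq1 X {S. openin X S \<and> Y \<subseteq> S} W V"
    by auto
  with Suc.IH preceq1_open_supersets_imp_Int_subset show ?case by blast
qed

lemma preceq1_open_supersets_if_Int_subset:
  assumes "regular_space X" and "Y \<subseteq> topspace X"
    and "openin X U" and "openin X V" and "U \<inter> Y \<subseteq> V"
  shows "preceq1 X {S. openin X S \<and> Y \<subseteq> S} U V"
proof -
  define P where "P = {(W, V \<union> (topspace X - C)) | W C.
                        openin X W \<and> closedin X C \<and> W \<subseteq> C \<and> C \<subseteq> U}"
  have "\<forall>(W, S) \<in> P. openin X W \<and> S \<in> {S. openin X S \<and> Y \<subseteq> S} \<and> S \<inter> W \<subseteq> V"
  proof clarify
    fix W S assume "(W, S) \<in> P"
    then obtain C where C: "S = V \<union> (topspace X - C)" "openin X W" "closedin X C" "W \<subseteq> C" "C \<subseteq> U"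
      unfolding P_def by auto
    have "openin X S"
      using C(1,3) assms(4) by (simp add: openin_Un openin_diff)
    moreover have "y \<in> S" if "y \<in> Y" for y
      using that C(1,5) assms(2,5) by (cases "y \<in> C") auto
    moreover have "S \<inter> W \<subseteq> V"
      using C(1,4) by auto
    ultimately show "openin X W \<and> S \<in> {S. openin X S \<and> Y \<subseteq> S} \<and> S \<inter> W \<subseteq> V"
      using C(2) by blast
  qed
  moreover have "U \<subseteq> \<Union>(fst ` P)"
  proof
    fix x assume "x \<in> U"
    then obtain W C where "openin X W" "closedin X C" "x \<in> W" "W \<subseteq> C" "C \<subseteq> U"
      using assms(1,3) unfolding neighbourhood_base_of_closedin[symmetric] neighbourhood_base_of
      by meson
    then have "(W, V \<union> (topspace X - C)) \<in> P" unfolding P_def by auto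
    with \<open>x \<in> W\<close> show "x \<in> \<Union>(fst ` P)" by force
  qed
  ultimately show ?thesis unfolding preceq1_def by blast
qed

lemma preceq_open_supersets_iff_Int_subset:
  assumes "regular_space X" and "Y \<subseteq> topspace X" and "openin X U" and "openin X V"
  shows "preceq X {S. openin X S \<and> Y \<subseteq> S} U V \<longleftrightarrow> U \<inter> Y \<subseteq> V"
proof
  assume "preceq X {S. openin X S \<and> Y \<subseteq> S} U V"
  then show "U \<inter> Y \<subseteq> V"
    unfolding preceq_def using preceqn_open_supersets_imp_Int_subset by blast
next
  assume "U \<inter> Y \<subseteq> V"
  then have "preceqn X {S. openin X S \<and> Y \<subseteq> S} 1 U V"
    using preceq1_open_supersets_if_Int_subset[OF assms] assms(3) by simp
  then show "preceq X {S. openin X S \<and> Y \<subseteq> S} U V"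
    unfolding preceq_def by blast
qed

lemma one_step_open_supersets:
  assumes "regular_space X" and "Y \<subseteq> topspace X"
  shows "one_step X {S. openin X S \<and> Y \<subseteq> S}"
  unfolding one_step_def
proof (intro allI impI)
  fix U V assume U: "openin X U" and V: "openin X V"
    and "preceq X {S. openin X S \<and> Y \<subseteq> S} U V"
  then have "U \<inter> Y \<subseteq> V"
    using preceq_open_supersets_iff_Int_subset[OF assms U V] by simp
  then show "preceq1 X {S. openin X S \<and> Y \<subseteq> S} U V"
    by (rule preceq1_open_supersets_if_Int_subset[OF assms U V])
qed

lemma quot_class_open_supersets:
  assumes "regular_space X" and "Y \<subseteq> topspace X" and "openin X U"
  shows "quot_class X {S. openin X S \<and> Y \<subseteq> S} U = {W. openin X W \<and> W \<inter> Y = U \<inter> Y}"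
proof -
  have "preceq X {S. openin X S \<and> Y \<subseteq> S} U W \<and> preceq X {S. openin X S \<and> Y \<subseteq> S} W U
        \<longleftrightarrow> W \<inter> Y = U \<inter> Y" if "openin X W" for W
    using preceq_open_supersets_iff_Int_subset[OF assms that]
      preceq_open_supersets_iff_Int_subset[OF assms(1,2) that assms(3)]
    by blast
  then show ?thesis
    unfolding quot_class_def by auto
qed

lemma quot_class_open_supersets_eq_iff:
  assumes "regular_space X" and "Y \<subseteq> topspace X" and "openin X U" and "openin X V"
  shows "quot_class X {S. openin X S \<and> Y \<subseteq> S} U = quot_class X {S. openin X S \<and> Y \<subseteq> S} V
         \<longleftrightarrow> U \<inter> Y = V \<inter> Y"
proof
  assume "quot_class X {S. openin X S \<and> Y \<subseteq> S} U = quot_class X {S. openin X S \<and> Y \<subseteq> S} V"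
  then have "U \<in> {W. openin X W \<and> W \<inter> Y = V \<inter> Y}"
    using quot_class_open_supersets[OF assms(1-3)] quot_class_open_supersets[OF assms(1,2,4)] assms(3)
    by auto
  then show "U \<inter> Y = V \<inter> Y" by simp
next
  assume "U \<inter> Y = V \<inter> Y"
  then show "quot_class X {S. openin X S \<and> Y \<subseteq> S} U = quot_class X {S. openin X S \<and> Y \<subseteq> S} V"
    using quot_class_open_supersets[OF assms(1-3)] quot_class_open_supersets[OF assms(1,2,4)] by simp
qed

theorem mainTheorem16:
  fixes X :: "'a topology" and Y :: "'a set" and F :: "'a set set"
  assumes "locally_compact_space X" and "Hausdorff_space X"
    and "Y \<subseteq> topspace X"
    and "F = {U. openin X U \<and> Y \<subseteq> U}"
  shows "m_filter X F \<and> one_step X F \<and>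
         (\<forall>U V. openin X U \<longrightarrow> openin X V \<longrightarrow>
            (quot_class X F U = quot_class X F V \<longleftrightarrow> U \<inter> Y = V \<inter> Y))"
proof -
  have reg: "regular_space X"
    using assms(1,2) locally_compact_Hausdorff_imp_regular_space by blast
  show ?thesis
    unfolding assms(4)
  proof (intro conjI allI impI)
    show "m_filter X {U. openin X U \<and> Y \<subseteq> U}"
      by (rule m_filter_open_supersets[OF assms(3)])
    show "one_step X {U. openin X U \<and> Y \<subseteq> U}"
      by (rule one_step_open_supersets[OF reg assms(3)])
    fix U V assume "openin X U" and "openin X V"
    then show "quot_class X {U. openin X U \<and> Y \<subseteq> U} U = quot_class X {U. openin X U \<and> Y \<subseteq> U} V
               \<longleftrightarrow> U \<inter> Y = V \<inter> Y"
      by (rule quot_class_open_supersets_eq_iff[OF reg assms(3)])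
  qed
qed

end
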